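(* Let $\eta^{ij}$ ($1\le i,j\le N$) be a constant nondegenerate symmetric matrix, let $c\neq 0$ be a constant, set $L=N$ and $\mu^{ij}=c\,\eta^{ij}$, and let $\Phi(u^1,\dots,u^N)$ be a function with $\psi_\alpha=\partial\Phi/\partial u^\alpha$, $1\le\alpha\le N$. Then the system $$\sum_{\alpha,\beta=1}^N\mu^{\alpha\beta}\Big(\frac{\partial^2\psi_\alpha}{\partial u^i\partial u^k}\frac{\partial^2\psi_\beta}{\partial u^j\partial u^l}-\frac{\partial^2\psi_\alpha}{\partial u^i\partial u^l}\frac{\partial^2\psi_\beta}{\partial u^j\partial u^k}\Big)=0\quad(\text{all } i,j,k,l)$$ (Gauss equations) and the system $$\sum_{i,j=1}^N\eta^{ij}\Big(\frac{\partial^2\psi_\alpha}{\partial u^i\partial u^k}\frac{\partial^2\psi_\beta}{\partial u^j\partial u^l}-\frac{\partial^2\psi_\alpha}{\partial u^i\partial u^l}\frac{\partial^2\psi_\beta}{\partial u^j\partial u^k}\Big)=0\quad(\text{all } \alpha,\beta,k,l)$$ (Ricci equations) coincide with each other, and both coincide with the associativity equations $$\sum_{i,j=1}^N\eta^{ij}\Big(\frac{\partial^3\Phi}{\partial u^i\partial u^m\partial u^k}\frac{\partial^3\Phi}{\partial u^j\partial u^n\partial u^l}-\frac{\partial^3\Phi}{\partial u^i\partial u^m\partial u^l}\frac{\partial^3\Phi}{\partial u^j\partial u^n\partial u^k}\Big)=0\quad\text{for all } m,n,k,l.$$ *)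

theory Defs
  imports "HOL-Analysis.Analysis"
begin

text \<open>Coordinates u = (u^1,...,u^N) are vectors in real^'n; the index set is the finite type 'n,
  so N = CARD('n).\<close>

definition pd :: "'n::finite \<Rightarrow> (real^'n \<Rightarrow> real) \<Rightarrow> real^'n \<Rightarrow> real" where
  "pd i f x = deriv (\<lambda>t. f (x + t *\<^sub>R axis i 1)) 0"

definition C1_partial_on :: "(real^'n::finite) set \<Rightarrow> (real^'n \<Rightarrow> real) \<Rightarrow> bool" where
  "C1_partial_on U f \<longleftrightarrow> continuous_on U f \<and>
     (\<forall>i. \<forall>x\<in>U. ((\<lambda>t. f (x + t *\<^sub>R axis i 1)) has_real_derivative pd i f x) (at 0)) \<and>
     (\<forall>i. continuous_on U (pd i f))"

definition C3_on :: "(real^'n::finite) set \<Rightarrow> (real^'n \<Rightarrow> real) \<Rightarrow> bool" where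
  "C3_on U f \<longleftrightarrow> C1_partial_on U f \<and> (\<forall>i. C1_partial_on U (pd i f)) \<and>
     (\<forall>i j. C1_partial_on U (pd j (pd i f)))"

end

theory Submission
  imports Defs
begin

text \<open>By Schwarz's theorem the third derivatives \<open>T a b c = pd a (pd b (pd c \<Phi>))\<close> of a \<open>C\<^sup>3\<close>
  function are totally symmetric. Since \<open>pd i (pd k (\<psi> \<alpha>)) = T i k \<alpha>\<close>, the Gauss expression at
  \<open>(i, j, k, l)\<close> is \<open>c\<close> times the Ricci expression at \<open>(\<alpha>, \<beta>) = (i, j)\<close>, and the Ricci expression
  at \<open>(\<alpha>, \<beta>, k, l)\<close> is the associativity expression at \<open>(m, n) = (\<alpha>, \<beta>)\<close>.\<close>

lemma dist_add_axes_le: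
  fixes x :: "real^'n::finite"
  shows "dist (x + s *\<^sub>R axis a 1 + t *\<^sub>R axis b 1) x \<le> \<bar>s\<bar> + \<bar>t\<bar>"
proof -
  have "norm (s *\<^sub>R axis a 1 + t *\<^sub>R axis b 1 :: real^'n)
      \<le> norm (s *\<^sub>R axis a 1 :: real^'n) + norm (t *\<^sub>R axis b 1 :: real^'n)"
    by (rule norm_triangle_ineq)
  then show ?thesis by (simp add: dist_norm add.assoc norm_axis_1)
qed

lemma axis_line_has_derivative_pd:
  fixes f :: "real^'n::finite \<Rightarrow> real"
  assumes "\<forall>y\<in>U. ((\<lambda>t. f (y + t *\<^sub>R axis i 1)) has_real_derivative pd i f y) (at 0)"
    and "y + s *\<^sub>R axis i 1 \<in> U"
  shows "((\<lambda>t. f (y + t *\<^sub>R axis i 1)) has_real_derivative pd i f (y + s *\<^sub>R axis i 1)) (at s)"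
proof -
  let ?z = "y + s *\<^sub>R axis i 1"
  have "((\<lambda>t. f (?z + t *\<^sub>R axis i 1)) has_real_derivative pd i f ?z) (at 0)"
    using assms by blast
  then have "((\<lambda>t. f (?z + (t - s) *\<^sub>R axis i 1)) has_real_derivative pd i f ?z) (at (0 + s))"
    using DERIV_shift[where f = "\<lambda>t. f (?z + (t - s) *\<^sub>R axis i 1)" and x = 0 and z = s]
    by simp
  moreover have "(\<lambda>t. f (?z + (t - s) *\<^sub>R axis i 1)) = (\<lambda>t. f (y + t *\<^sub>R axis i 1))"
    by (simp add: algebra_simps)
  ultimately show ?thesis by simp
qed

lemma second_difference_mean_value:
  fixes g :: "real^'n::finite \<Rightarrow> real"
  assumes d1: "\<forall>i. \<forall>y\<in>U. ((\<lambda>t. g (y + t *\<^sub>R axis i 1)) has_real_derivative pd i g y) (at 0)"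
    and d2: "\<forall>i j. \<forall>y\<in>U.
      ((\<lambda>t. pd i g (y + t *\<^sub>R axis j 1)) has_real_derivative pd j (pd i g) y) (at 0)"
    and h: "h > 0" and sub: "cball x (2 * h) \<subseteq> U"
  shows "\<exists>s t. 0 < s \<and> s < h \<and> 0 < t \<and> t < h \<and>
     g (x + h *\<^sub>R axis a 1 + h *\<^sub>R axis b 1) - g (x + h *\<^sub>R axis a 1) - g (x + h *\<^sub>R axis b 1) + g x
      = h * h * pd b (pd a g) (x + s *\<^sub>R axis a 1 + t *\<^sub>R axis b 1)"
proof -
  have inU: "x + s *\<^sub>R axis a 1 + t *\<^sub>R axis b 1 \<in> U"
    if "0 \<le> s" "s \<le> h" "0 \<le> t" "t \<le> h" for s t
    using dist_add_axes_le[of x s a t b] that sub by (auto simp: dist_commute)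
  define \<phi> where "\<phi> s = g (x + h *\<^sub>R axis b 1 + s *\<^sub>R axis a 1) - g (x + s *\<^sub>R axis a 1)" for s
  have "(\<phi> has_real_derivative
      pd a g (x + h *\<^sub>R axis b 1 + s *\<^sub>R axis a 1) - pd a g (x + s *\<^sub>R axis a 1)) (at s)"
    if "0 \<le> s" "s \<le> h" for s
  proof -
    have "x + h *\<^sub>R axis b 1 + s *\<^sub>R axis a 1 \<in> U" "x + s *\<^sub>R axis a 1 \<in> U"
      using inU[of s h] inU[of s 0] that h by (simp_all add: algebra_simps)
    then show ?thesis unfolding \<phi>_def
      by (intro DERIV_diff axis_line_has_derivative_pd[where U = U]) (use d1 in auto)
  qed
  from MVT2[OF h this] obtain s where s: "0 < s" "s < h" and s_eq: "\<phi> h - \<phi> 0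
      = h * (pd a g (x + h *\<^sub>R axis b 1 + s *\<^sub>R axis a 1) - pd a g (x + s *\<^sub>R axis a 1))"
    by auto
  define \<theta> where "\<theta> t = pd a g (x + s *\<^sub>R axis a 1 + t *\<^sub>R axis b 1)" for t
  have "(\<theta> has_real_derivative pd b (pd a g) (x + s *\<^sub>R axis a 1 + t *\<^sub>R axis b 1)) (at t)"
    if "0 \<le> t" "t \<le> h" for t
    unfolding \<theta>_def
    by (rule axis_line_has_derivative_pd[where U = U]) (use d2 inU[of s t] that s in auto)
  from MVT2[OF h this] obtain t where t: "0 < t" "t < h"
    and t_eq: "\<theta> h - \<theta> 0 = h * pd b (pd a g) (x + s *\<^sub>R axis a 1 + t *\<^sub>R axis b 1)"
    by auto
  have "g (x + h *\<^sub>R axis a 1 + h *\<^sub>R axis b 1) - g (x + h *\<^sub>R axis a 1) - g (x + h *\<^sub>R axis b 1) + g x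
      = \<phi> h - \<phi> 0" unfolding \<phi>_def by (simp add: algebra_simps)
  also have "\<dots> = h * (\<theta> h - \<theta> 0)" using s_eq unfolding \<theta>_def by (simp add: algebra_simps)
  also have "\<dots> = h * h * pd b (pd a g) (x + s *\<^sub>R axis a 1 + t *\<^sub>R axis b 1)"
    using t_eq by simp
  finally show ?thesis using s t by blast
qed

lemma mixed_partials_agree_nearby:
  fixes g :: "real^'n::finite \<Rightarrow> real"
  assumes d1: "\<forall>i. \<forall>y\<in>U. ((\<lambda>t. g (y + t *\<^sub>R axis i 1)) has_real_derivative pd i g y) (at 0)"
    and d2: "\<forall>i j. \<forall>y\<in>U.
      ((\<lambda>t. pd i g (y + t *\<^sub>R axis j 1)) has_real_derivative pd j (pd i g) y) (at 0)"
    and h: "h > 0" and sub: "cball x (2 * h) \<subseteq> U"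
  shows "\<exists>p q. dist p x < 2 * h \<and> dist q x < 2 * h \<and> pd b (pd a g) p = pd a (pd b g) q"
proof -
  obtain s1 t1 where st1: "0 < s1" "s1 < h" "0 < t1" "t1 < h" and
    eq1: "g (x + h *\<^sub>R axis a 1 + h *\<^sub>R axis b 1) - g (x + h *\<^sub>R axis a 1) - g (x + h *\<^sub>R axis b 1) + g x
      = h * h * pd b (pd a g) (x + s1 *\<^sub>R axis a 1 + t1 *\<^sub>R axis b 1)"
    using second_difference_mean_value[OF d1 d2 h sub, of a b] by blast
  obtain s2 t2 where st2: "0 < s2" "s2 < h" "0 < t2" "t2 < h" and
    eq2: "g (x + h *\<^sub>R axis b 1 + h *\<^sub>R axis a 1) - g (x + h *\<^sub>R axis b 1) - g (x + h *\<^sub>R axis a 1) + g x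
      = h * h * pd a (pd b g) (x + s2 *\<^sub>R axis b 1 + t2 *\<^sub>R axis a 1)"
    using second_difference_mean_value[OF d1 d2 h sub, of b a] by blast
  have corner: "x + h *\<^sub>R axis b 1 + h *\<^sub>R axis a 1 = x + h *\<^sub>R axis a 1 + h *\<^sub>R axis b 1"
    by (simp add: algebra_simps)
  have "h * h * pd b (pd a g) (x + s1 *\<^sub>R axis a 1 + t1 *\<^sub>R axis b 1)
     = h * h * pd a (pd b g) (x + s2 *\<^sub>R axis b 1 + t2 *\<^sub>R axis a 1)"
    using eq1 eq2[unfolded corner] by linarith
  with h have "pd b (pd a g) (x + s1 *\<^sub>R axis a 1 + t1 *\<^sub>R axis b 1)
     = pd a (pd b g) (x + s2 *\<^sub>R axis b 1 + t2 *\<^sub>R axis a 1)"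
    by simp
  moreover have "dist (x + s1 *\<^sub>R axis a 1 + t1 *\<^sub>R axis b 1) x < 2 * h"
    "dist (x + s2 *\<^sub>R axis b 1 + t2 *\<^sub>R axis a 1) x < 2 * h"
    using dist_add_axes_le[of x s1 a t1 b] dist_add_axes_le[of x s2 b t2 a] st1 st2 by simp_all
  ultimately show ?thesis by blast
qed

lemma pd_pd_commute:
  fixes g :: "real^'n::finite \<Rightarrow> real"
  assumes U: "open U" and x: "x \<in> U"
    and d1: "\<forall>i. \<forall>y\<in>U. ((\<lambda>t. g (y + t *\<^sub>R axis i 1)) has_real_derivative pd i g y) (at 0)"
    and d2: "\<forall>i j. \<forall>y\<in>U.
      ((\<lambda>t. pd i g (y + t *\<^sub>R axis j 1)) has_real_derivative pd j (pd i g) y) (at 0)"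
    and cont: "\<forall>i j. continuous_on U (pd j (pd i g))"
  shows "pd b (pd a g) x = pd a (pd b g) x"
proof (rule ccontr)
  assume ne: "pd b (pd a g) x \<noteq> pd a (pd b g) x"
  define e where "e = \<bar>pd b (pd a g) x - pd a (pd b g) x\<bar> / 2"
  have e: "e > 0" using ne by (simp add: e_def)
  have "isCont (pd b (pd a g)) x" "isCont (pd a (pd b g)) x"
    using cont U x continuous_on_eq_continuous_at by blast+
  then obtain dab dba where "dab > 0" "dba > 0"
    and dab: "\<And>y. dist y x < dab \<Longrightarrow> dist (pd b (pd a g) y) (pd b (pd a g) x) < e"
    and dba: "\<And>y. dist y x < dba \<Longrightarrow> dist (pd a (pd b g) y) (pd a (pd b g) x) < e"
    using e unfolding continuous_at_eps_delta by blast
  obtain r where r: "r > 0" "ball x r \<subseteq> U" using U x open_contains_ball by blast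
  define h where "h = min r (min dab dba) / 3"
  have h: "h > 0" using r \<open>dab > 0\<close> \<open>dba > 0\<close> by (simp add: h_def)
  have "2 * h < r" using r \<open>dab > 0\<close> \<open>dba > 0\<close> unfolding h_def by linarith
  then have "cball x (2 * h) \<subseteq> ball x r" by (simp add: cball_subset_ball_iff)
  with r have "cball x (2 * h) \<subseteq> U" by blast
  then obtain p q where p: "dist p x < 2 * h" and q: "dist q x < 2 * h"
    and pq: "pd b (pd a g) p = pd a (pd b g) q"
    using mixed_partials_agree_nearby[OF d1 d2 h] by blast
  have "2 * h \<le> dab" "2 * h \<le> dba" using h unfolding h_def by linarith+
  then have "dist (pd b (pd a g) p) (pd b (pd a g) x) < e" "dist (pd a (pd b g) q) (pd a (pd b g) x) < e"
    using dab[of p] dba[of q] p q by simp_all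
  then have "\<bar>pd b (pd a g) x - pd a (pd b g) x\<bar> < 2 * e"
    using pq unfolding dist_real_def by (simp add: abs_diff_less_iff)
  then show False unfolding e_def by simp
qed

lemma pd_cong_open:
  assumes U: "open U" and x: "x \<in> U" and eq: "\<And>y. y \<in> U \<Longrightarrow> f y = g y"
  shows "pd i f x = pd i g x"
proof -
  let ?S = "(\<lambda>t::real. x + t *\<^sub>R axis i 1) -` U"
  have "open ?S" using U by (intro open_vimage continuous_intros)
  moreover have "0 \<in> ?S" using x by simp
  ultimately have "\<forall>\<^sub>F t in nhds 0. t \<in> ?S" by (rule eventually_nhds_in_open)
  then have "\<forall>\<^sub>F t in nhds 0. f (x + t *\<^sub>R axis i 1) = g (x + t *\<^sub>R axis i 1)"
    by eventually_elim (simp add: eq)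
  then show ?thesis unfolding pd_def by (rule deriv_cong_ev) simp
qed

lemma C3_on_pd3_swap_12:
  assumes "open U" "x \<in> U" "C3_on U \<Phi>"
  shows "pd a (pd b (pd c \<Phi>)) x = pd b (pd a (pd c \<Phi>)) x"
  using assms by (intro pd_pd_commute[where U = U]) (auto simp: C3_on_def C1_partial_on_def)

lemma C3_on_pd3_swap_23:
  assumes U: "open U" and x: "x \<in> U" and smooth: "C3_on U \<Phi>"
  shows "pd a (pd b (pd c \<Phi>)) x = pd a (pd c (pd b \<Phi>)) x"
proof (rule pd_cong_open[OF U x])
  fix y assume "y \<in> U"
  with U smooth show "pd b (pd c \<Phi>) y = pd c (pd b \<Phi>) y"
    by (intro pd_pd_commute[where U = U]) (auto simp: C3_on_def C1_partial_on_def)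
qed

lemma symmetric_tensor_gauss_iff_ricci_iff_associativity:
  fixes T :: "'n::finite \<Rightarrow> 'n \<Rightarrow> 'n \<Rightarrow> real" and \<eta> :: "real^'n^'n"
  assumes swap_12: "\<And>a b c. T a b c = T b a c" and swap_23: "\<And>a b c. T a b c = T a c b"
    and c: "c \<noteq> 0"
  shows
    "((\<forall>i j k l. (\<Sum>\<alpha>\<in>UNIV. \<Sum>\<beta>\<in>UNIV. (c *\<^sub>R \<eta>) $ \<alpha> $ \<beta> *
          (T i k \<alpha> * T j l \<beta> - T i l \<alpha> * T j k \<beta>)) = 0)
      \<longleftrightarrow>
      (\<forall>\<alpha> \<beta> k l. (\<Sum>i\<in>UNIV. \<Sum>j\<in>UNIV. \<eta> $ i $ j *
          (T i k \<alpha> * T j l \<beta> - T i l \<alpha> * T j k \<beta>)) = 0))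
     \<and>
     ((\<forall>\<alpha> \<beta> k l. (\<Sum>i\<in>UNIV. \<Sum>j\<in>UNIV. \<eta> $ i $ j *
          (T i k \<alpha> * T j l \<beta> - T i l \<alpha> * T j k \<beta>)) = 0)
      \<longleftrightarrow>
      (\<forall>m n k l. (\<Sum>i\<in>UNIV. \<Sum>j\<in>UNIV. \<eta> $ i $ j *
          (T i m k * T j n l - T i m l * T j n k)) = 0))"
proof -
  have reverse: "T a b c = T c b a" for a b c
    by (metis swap_12 swap_23)
  have gauss: "(\<Sum>\<alpha>\<in>UNIV. \<Sum>\<beta>\<in>UNIV. (c *\<^sub>R \<eta>) $ \<alpha> $ \<beta> *
          (T i k \<alpha> * T j l \<beta> - T i l \<alpha> * T j k \<beta>))
    = c * (\<Sum>\<alpha>\<in>UNIV. \<Sum>\<beta>\<in>UNIV. \<eta> $ \<alpha> $ \<beta> *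
          (T \<alpha> k i * T \<beta> l j - T \<alpha> l i * T \<beta> k j))" for i j k l
    by (simp add: sum_distrib_left mult.assoc reverse[of i] reverse[of j])
  have ricci: "(\<Sum>i\<in>UNIV. \<Sum>j\<in>UNIV. \<eta> $ i $ j *
          (T i k \<alpha> * T j l \<beta> - T i l \<alpha> * T j k \<beta>))
    = (\<Sum>i\<in>UNIV. \<Sum>j\<in>UNIV. \<eta> $ i $ j *
          (T i \<alpha> k * T j \<beta> l - T i \<alpha> l * T j \<beta> k))" for \<alpha> \<beta> k l
    using swap_23 by simp
  show ?thesis
    unfolding gauss ricci using c by auto
qed

theorem mainTheorem3:
  fixes \<eta> :: "real^'n::finite^'n" and c :: real and \<Phi> :: "real^'n \<Rightarrow> real"
    and U :: "(real^'n) set"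
  assumes sym: "transpose \<eta> = \<eta>"
    and nondeg: "det \<eta> \<noteq> 0"
    and c: "c \<noteq> 0"
    and U: "open U"
    and smooth: "C3_on U \<Phi>"
  defines "\<mu> \<equiv> c *\<^sub>R \<eta>"
  defines "\<psi> \<equiv> (\<lambda>\<alpha>. pd \<alpha> \<Phi>)"
  assumes x: "x \<in> U"
  shows
    "((\<forall>i j k l. (\<Sum>\<alpha>\<in>UNIV. \<Sum>\<beta>\<in>UNIV. \<mu> $ \<alpha> $ \<beta> *
          (pd i (pd k (\<psi> \<alpha>)) x * pd j (pd l (\<psi> \<beta>)) x
           - pd i (pd l (\<psi> \<alpha>)) x * pd j (pd k (\<psi> \<beta>)) x)) = 0)
      \<longleftrightarrow>
      (\<forall>\<alpha> \<beta> k l. (\<Sum>i\<in>UNIV. \<Sum>j\<in>UNIV. \<eta> $ i $ j *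
          (pd i (pd k (\<psi> \<alpha>)) x * pd j (pd l (\<psi> \<beta>)) x
           - pd i (pd l (\<psi> \<alpha>)) x * pd j (pd k (\<psi> \<beta>)) x)) = 0))
     \<and>
     ((\<forall>\<alpha> \<beta> k l. (\<Sum>i\<in>UNIV. \<Sum>j\<in>UNIV. \<eta> $ i $ j *
          (pd i (pd k (\<psi> \<alpha>)) x * pd j (pd l (\<psi> \<beta>)) x
           - pd i (pd l (\<psi> \<alpha>)) x * pd j (pd k (\<psi> \<beta>)) x)) = 0)
      \<longleftrightarrow>
      (\<forall>m n k l. (\<Sum>i\<in>UNIV. \<Sum>j\<in>UNIV. \<eta> $ i $ j *
          (pd i (pd m (pd k \<Phi>)) x * pd j (pd n (pd l \<Phi>)) x
           - pd i (pd m (pd l \<Phi>)) x * pd j (pd n (pd k \<Phi>)) x)) = 0))"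
proof -
  define T where "T a b c = pd a (pd b (pd c \<Phi>)) x" for a b c
  have swap_12: "T a b c = T b a c" for a b c
    unfolding T_def using C3_on_pd3_swap_12[OF U x smooth] .
  have swap_23: "T a b c = T a c b" for a b c
    unfolding T_def using C3_on_pd3_swap_23[OF U x smooth] .
  have pd3_eq_T: "pd a (pd b (pd c \<Phi>)) x = T a b c" for a b c
    by (simp add: T_def)
  show ?thesis
    unfolding \<mu>_def \<psi>_def pd3_eq_T
    by (rule symmetric_tensor_gauss_iff_ricci_iff_associativity[OF swap_12 swap_23 c])
qed

end
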